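(* Let $\chi:B_n\to D_n$ be the map with $\chi(w)=w$ if $w\in D_n$ and, if $w\notin D_n$, $\chi(w)$ is obtained from $w$ by changing the sign of its first entry $w_1$. The linear extension of $\chi$ maps $\Sigma(B_n)$ into $\Sigma(D_n)$, and the resulting map $\chi:\Sigma(B_n)\to\Sigma(D_n)$ is a morphism of algebras. Explicitly, for every $J\subseteq\{2,\dots,n-1\}$: $Y_J\mapsto Y_J$; $Y_{\{1\}\cup J}\mapsto Y_{\{1'\}\cup J}+Y_{\{1\}\cup J}+Y_{\{1',1\}\cup J}$; $Y_{\{0\}\cup J}\mapsto Y_J+Y_{\{1'\}\cup J}+Y_{\{1\}\cup J}$; $Y_{\{0,1\}\cup J}\mapsto Y_{\{1',1\}\cup J}$; equivalently, $X_J\mapsto X_J$; $X_{\{1\}\cup J}\mapsto X_{\{1',1\}\cup J}$; $X_{\{0\}\cup J}\mapsto X_{\{1'\}\cup J}+X_{\{1\}\cup J}$; $X_{\{0,1\}\cup J}\mapsto 2X_{\{1',1\}\cup J}$.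
   Context: Group algebras over $\mathbb{Q}$ with product composition. $B_n$: signed permutations $w=w_1\dots w_n$ (bijections of $\{\pm1,\dots,\pm n\}$ with $w(-i)=-w(i)$), values ordered $\cdots<-2<-1<1<2<\cdots$, $w_0=0$; $\mathrm{Des}(w)=\{i\in\{0,\dots,n-1\}:w_i>w_{i+1}\}$; in $\mathbb{Q}B_n$, $Y_J=\sum_{\mathrm{Des}(w)=J}w$ and $X_J=\sum_{I\subseteq J}Y_I$ for $J\subseteq\{0,\dots,n-1\}$; $\Sigma(B_n)=\mathrm{span}\{Y_J\}$. $D_n\subseteq B_n$: signed permutations with an even number of negative entries; the descent set of $w\in D_n$ is the subset of $\{1',1,2,\dots,n-1\}$ in which $1'$ is a descent iff $-w_1>w_2$ and $i\in[n-1]$ is a descent iff $w_i>w_{i+1}$; in $\mathbb{Q}D_n$, $Y_J=\sum_{\mathrm{Des}(w)=J}w$, $X_J=\sum_{I\subseteq J}Y_I$ for $J\subseteq\{1',1,\dots,n-1\}$, and $\Sigma(D_n)=\mathrm{span}\{Y_J\}$. *)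

theory Defs
  imports Complex_Main
begin

text \<open>Signed permutations of [n] are represented as functions w :: int => int
  with w(-i) = -w(i), restricting to a bijection of {-n..-1} u {1..n}, and
  fixing every other integer (in particular w 0 = 0, matching the convention w_0 = 0).\<close>

definition signed_range :: "nat \<Rightarrow> int set" where
  "signed_range n = {-int n..-1} \<union> {1..int n}"

definition B :: "nat \<Rightarrow> (int \<Rightarrow> int) set" where
  "B n = {w. (\<forall>i. w (-i) = - w i) \<and> bij_betw w (signed_range n) (signed_range n)
             \<and> (\<forall>i. i \<notin> signed_range n \<longrightarrow> w i = i)}"

definition D :: "nat \<Rightarrow> (int \<Rightarrow> int) set" where
  "D n = {w \<in> B n. even (card {i \<in> {1..int n}. w i < 0})}"

text \<open>Type B descent set, a subset of {0,...,n-1} (uses w 0 = 0).\<close>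
definition DesB :: "nat \<Rightarrow> (int \<Rightarrow> int) \<Rightarrow> nat set" where
  "DesB n w = {i \<in> {0..<n}. w (int i) > w (int i + 1)}"

text \<open>Type D descent labels {1',1,...,n-1}: One' stands for 1', L i for i in [n-1].\<close>
datatype dlab = One' | L nat

definition DesD :: "nat \<Rightarrow> (int \<Rightarrow> int) \<Rightarrow> dlab set" where
  "DesD n w = (if - w 1 > w 2 then {One'} else {}) \<union> L ` {i \<in> {1..<n}. w (int i) > w (int i + 1)}"

definition labelsD :: "nat \<Rightarrow> dlab set" where
  "labelsD n = insert One' (L ` {1..<n})"

text \<open>Elements of the group algebra QG (G a finite group of signed permutations) are
  functions (int => int) => rat (coefficient of each group element), supported on G.\<close>
definition conv :: "(int \<Rightarrow> int) set \<Rightarrow> ((int \<Rightarrow> int) \<Rightarrow> rat) \<Rightarrow> ((int \<Rightarrow> int) \<Rightarrow> rat)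
                      \<Rightarrow> ((int \<Rightarrow> int) \<Rightarrow> rat)" where
  "conv G a b = (\<lambda>z. \<Sum>x\<in>G. \<Sum>y\<in>G. if x \<circ> y = z then a x * b y else 0)"

definition YB :: "nat \<Rightarrow> nat set \<Rightarrow> ((int \<Rightarrow> int) \<Rightarrow> rat)" where
  "YB n J = (\<lambda>w. if w \<in> B n \<and> DesB n w = J then 1 else 0)"

definition XB :: "nat \<Rightarrow> nat set \<Rightarrow> ((int \<Rightarrow> int) \<Rightarrow> rat)" where
  "XB n J = (\<lambda>w. \<Sum>I\<in>Pow J. YB n I w)"

definition YD :: "nat \<Rightarrow> dlab set \<Rightarrow> ((int \<Rightarrow> int) \<Rightarrow> rat)" where
  "YD n J = (\<lambda>w. if w \<in> D n \<and> DesD n w = J then 1 else 0)"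

definition XD :: "nat \<Rightarrow> dlab set \<Rightarrow> ((int \<Rightarrow> int) \<Rightarrow> rat)" where
  "XD n J = (\<lambda>w. \<Sum>I\<in>Pow J. YD n I w)"

definition SigmaB :: "nat \<Rightarrow> ((int \<Rightarrow> int) \<Rightarrow> rat) set" where
  "SigmaB n = {a. \<exists>c :: nat set \<Rightarrow> rat. a = (\<lambda>w. \<Sum>J\<in>Pow {0..<n}. c J * YB n J w)}"

definition SigmaD :: "nat \<Rightarrow> ((int \<Rightarrow> int) \<Rightarrow> rat) set" where
  "SigmaD n = {a. \<exists>c :: dlab set \<Rightarrow> rat. a = (\<lambda>w. \<Sum>J\<in>Pow (labelsD n). c J * YD n J w)}"

definition chi :: "nat \<Rightarrow> (int \<Rightarrow> int) \<Rightarrow> (int \<Rightarrow> int)" where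
  "chi n w = (if w \<in> D n then w
              else (\<lambda>i. if i = 1 then - w 1 else if i = -1 then w 1 else w i))"

definition chi_lin :: "nat \<Rightarrow> ((int \<Rightarrow> int) \<Rightarrow> rat) \<Rightarrow> ((int \<Rightarrow> int) \<Rightarrow> rat)" where
  "chi_lin n a = (\<lambda>v. \<Sum>w\<in>B n. if chi n w = v then a w else 0)"

end

theory Submission
  imports Defs "HOL-Library.FuncSet"
begin

text \<open>Let \<open>s0\<close> be the Coxeter generator of \<open>B\<^sub>n\<close> exchanging 1 and -1, so that \<open>w \<circ> s0\<close> is \<open>w\<close>
  with its first entry negated. Then \<open>B\<^sub>n = D\<^sub>n \<union> D\<^sub>n s0\<close> (the parity of the number of
  negative entries is a character), and \<open>\<chi>(f)(v) = f(v) + f(v s0)\<close> for \<open>v \<in> D\<^sub>n\<close>.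
  Writing \<open>x = x\<^sub>1 + x\<^sub>2 s0\<close> with \<open>x\<^sub>1, x\<^sub>2 \<in> \<rat>D\<^sub>n\<close> one finds
  \<open>\<chi>(x y) = x\<^sub>1 \<chi>(y) + x\<^sub>2 s0 \<chi>(y) s0\<close>, so \<open>\<chi>(x y) = \<chi>(x) \<chi>(y)\<close> as soon as \<open>\<chi>(y)\<close>
  commutes with \<open>s0\<close>. For \<open>y \<in> \<Sigma>(B\<^sub>n)\<close> it does: left multiplication by \<open>s0\<close> preserves
  the descent set of \<open>w\<close> unless \<open>|w\<^sub>1| = 1\<close>, and in that case \<open>s0\<close> commutes with \<open>w\<close>.

  For \<open>v \<in> D\<^sub>n\<close> with type D descent set \<open>K\<close>, the type B descent sets of \<open>v\<close> and \<open>v s0\<close> are,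
  in some order, \<open>insert 0 (des_meet K)\<close> and \<open>des_join K\<close>; both agree with \<open>K\<close> at the
  positions \<open>\<ge> 2\<close>, and contain 1 iff both, resp. at least one, of \<open>1, 1'\<close> lie in \<open>K\<close>. So
  \<open>\<chi>\<close> maps \<open>\<Sigma>(B\<^sub>n)\<close> to functions of the type D descent set, and the formulas for \<open>Y\<^sub>J\<close>
  and \<open>X\<^sub>J\<close> reduce to checking the four possibilities for \<open>K \<inter> {1', 1}\<close>.\<close>

section \<open>Signed permutations\<close>

lemma signed_range_iff: "i \<in> signed_range n \<longleftrightarrow> i \<noteq> 0 \<and> \<bar>i\<bar> \<le> int n"
  unfolding signed_range_def by auto

lemma finite_signed_range: "finite (signed_range n)"
  unfolding signed_range_def by simp

lemma B_odd: "w \<in> B n \<Longrightarrow> w (- i) = - w i"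
  unfolding B_def by auto

lemma B_bij_betw: "w \<in> B n \<Longrightarrow> bij_betw w (signed_range n) (signed_range n)"
  unfolding B_def by auto

lemma B_fixes_outside: "w \<in> B n \<Longrightarrow> i \<notin> signed_range n \<Longrightarrow> w i = i"
  unfolding B_def by auto

lemma B_maps_signed_range: "w \<in> B n \<Longrightarrow> i \<in> signed_range n \<Longrightarrow> w i \<in> signed_range n"
  using B_bij_betw bij_betwE by blast

lemma B_zero: "w \<in> B n \<Longrightarrow> w 0 = 0"
  using B_fixes_outside signed_range_iff by auto

lemma B_nonzero: "w \<in> B n \<Longrightarrow> 1 \<le> i \<Longrightarrow> i \<le> int n \<Longrightarrow> w i \<noteq> 0"
  using B_maps_signed_range signed_range_iff by fastforce

lemma inj_B: assumes "w \<in> B n" shows "inj w"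
proof (rule injI)
  fix i j assume eq: "w i = w j"
  have inj: "inj_on w (signed_range n)"
    using B_bij_betw[OF assms] bij_betw_imp_inj_on by blast
  show "i = j"
  proof (cases "i \<in> signed_range n"; cases "j \<in> signed_range n")
    assume "i \<in> signed_range n" "j \<in> signed_range n"
    then show ?thesis using eq inj inj_onD by metis
  qed (use eq B_maps_signed_range[OF assms] B_fixes_outside[OF assms] in force)+
qed

lemma B_abs_neq: assumes "w \<in> B n" "1 \<le> i" "1 \<le> j" "i \<noteq> j" shows "\<bar>w i\<bar> \<noteq> \<bar>w j\<bar>"
proof -
  have "w i \<noteq> w j" "w i \<noteq> w (- j)"
    using injD[OF inj_B[OF assms(1)]] assms(2-4) by force+
  then show ?thesis
    using B_odd[OF assms(1), of j] by (auto simp: abs_eq_iff)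
qed

lemma comp_in_B: assumes "x \<in> B n" "y \<in> B n" shows "x \<circ> y \<in> B n"
  unfolding B_def
proof (intro CollectI conjI allI impI)
  show "bij_betw (x \<circ> y) (signed_range n) (signed_range n)"
    using B_bij_betw assms bij_betw_trans by blast
qed (use B_odd[OF assms(1)] B_odd[OF assms(2)] B_fixes_outside[OF assms(1)] B_fixes_outside[OF assms(2)] in auto)

lemma finite_B: "finite (B n)"
proof -
  have "inj_on (\<lambda>w. restrict w (signed_range n)) (B n)"
  proof (rule inj_onI)
    fix x y assume x: "x \<in> B n" and y: "y \<in> B n"
      and eq: "restrict x (signed_range n) = restrict y (signed_range n)"
    show "x = y"
    proof
      fix i show "x i = y i"
        using fun_cong[OF eq, of i] B_fixes_outside[OF x, of i] B_fixes_outside[OF y, of i]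
        by (cases "i \<in> signed_range n") auto
    qed
  qed
  moreover have "(\<lambda>w. restrict w (signed_range n)) ` B n \<subseteq> signed_range n \<rightarrow>\<^sub>E signed_range n"
    using B_maps_signed_range by auto
  moreover have "finite (signed_range n \<rightarrow>\<^sub>E signed_range n)"
    by (simp add: finite_PiE finite_signed_range)
  ultimately show ?thesis
    by (rule inj_on_finite)
qed

section \<open>The coset decomposition \<open>B\<^sub>n = D\<^sub>n \<union> D\<^sub>n s0\<close>\<close>

definition s0 :: "int \<Rightarrow> int" where
  "s0 i = (if i = 1 then -1 else if i = -1 then 1 else i)"

lemma comp_s0_s0 [simp]: "s0 \<circ> s0 = id" "f \<circ> s0 \<circ> s0 = f" "s0 \<circ> (s0 \<circ> g) = g"
  by (simp_all add: fun_eq_iff s0_def)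

lemma s0_in_B: assumes "1 \<le> n" shows "s0 \<in> B n"
  unfolding B_def
proof (intro CollectI conjI allI impI)
  show "bij_betw s0 (signed_range n) (signed_range n)"
    by (rule bij_betw_byWitness[where f'=s0]) (use assms in \<open>auto simp: s0_def signed_range_iff\<close>)
qed (use assms in \<open>auto simp: s0_def signed_range_iff\<close>)

lemma apply_s0: "w \<in> B n \<Longrightarrow> w (s0 i) = (if i = 1 then - w 1 else if i = -1 then w 1 else w i)"
  using B_odd[of w n 1] by (simp add: s0_def)

definition neg_sign :: "nat \<Rightarrow> (int \<Rightarrow> int) \<Rightarrow> int" where
  "neg_sign n w = (\<Prod>i\<in>{1..int n}. sgn (w i))"

lemma neg_sign_eq: assumes "w \<in> B n" shows "neg_sign n w = (-1) ^ card {i \<in> {1..int n}. w i < 0}"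
proof -
  have "neg_sign n w = (\<Prod>i\<in>{1..int n}. if w i < 0 then -1 else 1)"
    unfolding neg_sign_def using B_nonzero[OF assms] by (intro prod.cong) (auto simp: sgn_if)
  also have "\<dots> = (-1) ^ card {i \<in> {1..int n}. w i < 0}"
    by (simp add: prod.If_cases Int_def conj_commute)
  finally show ?thesis .
qed

lemma D_iff_neg_sign: "w \<in> D n \<longleftrightarrow> w \<in> B n \<and> neg_sign n w = 1"
  unfolding D_def using neg_sign_eq by (auto simp: minus_one_power_iff split: if_splits)

lemma neg_sign_cases: "w \<in> B n \<Longrightarrow> neg_sign n w = 1 \<or> neg_sign n w = -1"
  by (simp add: neg_sign_eq minus_one_power_iff)

lemma bij_betw_abs_B: assumes "y \<in> B n"
  shows "bij_betw (\<lambda>i. \<bar>y i\<bar>) {1..int n} {1..int n}"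
proof -
  have inj: "inj_on (\<lambda>i. \<bar>y i\<bar>) {1..int n}"
  proof (rule inj_onI, rule ccontr)
    fix i j assume "i \<in> {1..int n}" "j \<in> {1..int n}" "\<bar>y i\<bar> = \<bar>y j\<bar>" "i \<noteq> j"
    then show False
      using B_abs_neq[OF assms, of i j] by simp
  qed
  have "\<bar>y i\<bar> \<in> {1..int n}" if "i \<in> {1..int n}" for i
    using B_maps_signed_range[OF assms, of i] that unfolding signed_range_iff by auto
  then have "(\<lambda>i. \<bar>y i\<bar>) ` {1..int n} \<subseteq> {1..int n}"
    by blast
  then have "(\<lambda>i. \<bar>y i\<bar>) ` {1..int n} = {1..int n}"
    using endo_inj_surj[OF _ _ inj] by simp
  then show ?thesis
    using inj by (simp add: bij_betw_def)
qed

lemma neg_sign_comp: assumes x: "x \<in> B n" and y: "y \<in> B n"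
  shows "neg_sign n (x \<circ> y) = neg_sign n x * neg_sign n y"
proof -
  have "sgn (x (y i)) = sgn (y i) * sgn (x \<bar>y i\<bar>)" if "i \<in> {1..int n}" for i
    using B_nonzero[OF y, of i] B_odd[OF x, of "y i"] that by (auto simp: abs_if sgn_minus)
  then have "neg_sign n (x \<circ> y) = neg_sign n y * (\<Prod>i\<in>{1..int n}. sgn (x \<bar>y i\<bar>))"
    unfolding neg_sign_def by (simp add: prod.distrib)
  also have "(\<Prod>i\<in>{1..int n}. sgn (x \<bar>y i\<bar>)) = neg_sign n x"
    unfolding neg_sign_def using prod.reindex_bij_betw[OF bij_betw_abs_B[OF y]] by simp
  finally show ?thesis
    by (simp add: comp_def mult.commute)
qed

lemma D_imp_B: "w \<in> D n \<Longrightarrow> w \<in> B n"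
  unfolding D_def by simp

lemma finite_D: "finite (D n)"
  using finite_B D_imp_B by (blast intro: finite_subset)

lemma comp_in_D_iff: assumes "x \<in> B n" "y \<in> B n" shows "x \<circ> y \<in> D n \<longleftrightarrow> (x \<in> D n \<longleftrightarrow> y \<in> D n)"
  using neg_sign_comp[OF assms] neg_sign_cases[OF assms(1)] neg_sign_cases[OF assms(2)]
  by (auto simp: D_iff_neg_sign comp_in_B assms)

lemma s0_notin_D: assumes "1 \<le> n" shows "s0 \<notin> D n"
proof -
  have "{i \<in> {1..int n}. s0 i < 0} = {1}"
    using assms by (auto simp: s0_def)
  then show ?thesis
    using neg_sign_eq[OF s0_in_B[OF assms]] by (simp add: D_iff_neg_sign)
qed

lemma comp_s0_in_D_iff: "1 \<le> n \<Longrightarrow> w \<in> B n \<Longrightarrow> w \<circ> s0 \<in> D n \<longleftrightarrow> w \<notin> D n"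
  using comp_in_D_iff s0_in_B s0_notin_D by blast

lemma s0_conj_in_D: assumes "1 \<le> n" "y \<in> D n" shows "s0 \<circ> y \<circ> s0 \<in> D n"
  using assms comp_in_D_iff comp_in_B s0_in_B s0_notin_D D_imp_B by metis

lemma sum_B_split: assumes "1 \<le> n" shows "(\<Sum>x\<in>B n. F x) = (\<Sum>x\<in>D n. F x + F (x \<circ> s0))"
proof -
  have B_eq: "B n = D n \<union> (\<lambda>x. x \<circ> s0) ` D n"
  proof
    show "B n \<subseteq> D n \<union> (\<lambda>x. x \<circ> s0) ` D n"
    proof
      fix w assume "w \<in> B n"
      then have "w \<in> D n \<or> w \<circ> s0 \<in> D n"
        using comp_s0_in_D_iff[OF assms] by blast
      moreover have "w = w \<circ> s0 \<circ> s0"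
        by simp
      ultimately show "w \<in> D n \<union> (\<lambda>x. x \<circ> s0) ` D n"
        by blast
    qed
  qed (use D_imp_B comp_in_B s0_in_B[OF assms] in auto)
  have "D n \<inter> (\<lambda>x. x \<circ> s0) ` D n = {}"
    using comp_s0_in_D_iff[OF assms] D_imp_B by blast
  moreover have "inj_on (\<lambda>x. x \<circ> s0) (D n)"
    by (rule inj_onI) (metis comp_s0_s0(2))
  ultimately show ?thesis
    unfolding B_eq by (simp add: sum.union_disjoint finite_D sum.reindex sum.distrib)
qed

lemma chi_eq: "w \<in> B n \<Longrightarrow> chi n w = (if w \<in> D n then w else w \<circ> s0)"
  unfolding chi_def by (simp add: apply_s0 fun_eq_iff)

lemma chi_lin_apply: assumes "1 \<le> n"
  shows "chi_lin n f v = (if v \<in> D n then f v + f (v \<circ> s0) else 0)"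
proof -
  have "chi n x = x" "chi n (x \<circ> s0) = x" if "x \<in> D n" for x
    using that chi_eq D_imp_B comp_in_B s0_in_B[OF assms] comp_s0_in_D_iff[OF assms] by auto
  then have "chi_lin n f v = (\<Sum>x\<in>D n. if x = v then f v + f (v \<circ> s0) else 0)"
    unfolding chi_lin_def sum_B_split[OF assms] by (intro sum.cong) auto
  then show ?thesis
    by (simp add: finite_D)
qed

section \<open>Multiplicativity\<close>

lemma s0_less_iff: assumes "p \<noteq> 0" "q \<noteq> 0" "\<bar>p\<bar> \<noteq> \<bar>q\<bar>" shows "s0 q < s0 p \<longleftrightarrow> q < p"
  using assms unfolding s0_def by auto

lemma DesB_s0_comp: assumes z: "z \<in> B n" and z1: "\<bar>z 1\<bar> \<noteq> 1" shows "DesB n (s0 \<circ> z) = DesB n z"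
  unfolding DesB_def
proof (intro Collect_cong conj_cong refl)
  fix i assume i: "i \<in> {0..<n}"
  show "(s0 \<circ> z) (int i + 1) < (s0 \<circ> z) (int i) \<longleftrightarrow> z (int i + 1) < z (int i)"
  proof (cases "i = 0")
    case True
    then show ?thesis
      using B_zero[OF z] z1 by (simp add: s0_def abs_if split: if_splits)
  next
    case False
    then show ?thesis
      using i s0_less_iff B_nonzero[OF z] B_abs_neq[OF z, of "int i" "int i + 1"] by simp
  qed
qed

lemma s0_comp_commute: assumes y: "y \<in> B n" and y1: "\<bar>y 1\<bar> = 1" shows "s0 \<circ> y = y \<circ> s0"
proof
  fix i
  show "(s0 \<circ> y) i = (y \<circ> s0) i"
  proof (cases "i = 1 \<or> i = -1")
    case False
    then have "y i \<noteq> y 1" "y i \<noteq> y (-1)"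
      using inj_B[OF y] by (auto dest: injD)
    then show ?thesis
      using False y1 B_odd[OF y, of 1] by (auto simp: s0_def)
  qed (use y1 B_odd[OF y, of 1] in \<open>auto simp: s0_def\<close>)
qed

lemma SigmaB_apply: assumes "a \<in> SigmaB n"
  obtains c where "\<And>w. a w = (if w \<in> B n then c (DesB n w) else 0)"
proof -
  obtain c where a: "a = (\<lambda>w. \<Sum>J\<in>Pow {0..<n}. c J * YB n J w)"
    using assms unfolding SigmaB_def by blast
  have "DesB n w \<in> Pow {0..<n}" for w
    unfolding DesB_def by auto
  then have "a w = (if w \<in> B n then c (DesB n w) else 0)" for w
    unfolding a YB_def by (simp add: if_distrib[of "(*) _"] sum.delta cong: if_cong)
  then show ?thesis
    using that by blast
qed

lemma SigmaB_apply_s0_comp: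
  assumes n: "1 \<le> n" and b: "b \<in> SigmaB n" and z: "z \<in> B n" and z1: "\<bar>z 1\<bar> \<noteq> 1"
  shows "b (s0 \<circ> z) = b z"
proof -
  obtain c where "\<And>w. b w = (if w \<in> B n then c (DesB n w) else 0)"
    using SigmaB_apply[OF b] by blast
  then show ?thesis
    using DesB_s0_comp[OF z z1] comp_in_B[OF s0_in_B[OF n] z] z by simp
qed

lemma chi_lin_SigmaB_s0_conj:
  assumes n: "1 \<le> n" and b: "b \<in> SigmaB n" and y: "y \<in> D n"
  shows "chi_lin n b (s0 \<circ> y \<circ> s0) = chi_lin n b y"
proof -
  have yB: "y \<in> B n"
    using y D_imp_B by blast
  have "chi_lin n b (s0 \<circ> y \<circ> s0) = b (s0 \<circ> y \<circ> s0) + b (s0 \<circ> y)"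
    using chi_lin_apply[OF n] s0_conj_in_D[OF n y] by simp
  also have "\<dots> = b y + b (y \<circ> s0)"
  proof (cases "\<bar>y 1\<bar> = 1")
    case True
    then show ?thesis
      using s0_comp_commute[OF yB] by simp
  next
    case False
    have "\<bar>(y \<circ> s0) 1\<bar> \<noteq> 1"
      using False apply_s0[OF yB, of 1] by simp
    then have "b (s0 \<circ> (y \<circ> s0)) = b (y \<circ> s0)"
      using SigmaB_apply_s0_comp[OF n b] comp_in_B[OF yB s0_in_B[OF n]] by blast
    moreover have "b (s0 \<circ> y) = b y"
      using SigmaB_apply_s0_comp[OF n b yB False] .
    ultimately show ?thesis
      by (simp add: o_assoc)
  qed
  also have "\<dots> = chi_lin n b y"
    using chi_lin_apply[OF n] y by simp
  finally show ?thesis .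
qed

lemma eq_comp_s0_iff: "f = g \<circ> s0 \<longleftrightarrow> f \<circ> s0 = g"
  by (metis comp_s0_s0(2))

lemma sum_D_s0_conj: assumes "1 \<le> n" shows "(\<Sum>y\<in>D n. g (s0 \<circ> y \<circ> s0)) = (\<Sum>y\<in>D n. g y)"
  by (rule sum.reindex_bij_witness[where i="\<lambda>y. s0 \<circ> y \<circ> s0" and j="\<lambda>y. s0 \<circ> y \<circ> s0"])
    (simp_all add: s0_conj_in_D[OF assms] o_assoc)

lemma conv_B_apply: assumes "1 \<le> n"
  shows "conv (B n) a b z = (\<Sum>x\<in>D n. \<Sum>y\<in>D n.
      (if x \<circ> y = z then a x * b y else 0)
    + (if x \<circ> (y \<circ> s0) = z then a x * b (y \<circ> s0) else 0)
    + (if x \<circ> s0 \<circ> y = z then a (x \<circ> s0) * b y else 0)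
    + (if x \<circ> s0 \<circ> (y \<circ> s0) = z then a (x \<circ> s0) * b (y \<circ> s0) else 0))"
  unfolding conv_def sum_B_split[OF assms] by (simp add: sum.distrib add.assoc)

lemma D_comp_parity: assumes n: "1 \<le> n" and x: "x \<in> D n" and y: "y \<in> D n"
  shows "x \<circ> y \<in> D n" "x \<circ> (y \<circ> s0) \<notin> D n" "x \<circ> s0 \<circ> y \<notin> D n" "x \<circ> s0 \<circ> (y \<circ> s0) \<in> D n"
proof -
  have xB: "x \<in> B n" and yB: "y \<in> B n"
    using x y D_imp_B by auto
  then have "x \<circ> s0 \<in> B n" "y \<circ> s0 \<in> B n"
    using comp_in_B s0_in_B[OF n] by auto
  then show "x \<circ> y \<in> D n" "x \<circ> (y \<circ> s0) \<notin> D n" "x \<circ> s0 \<circ> y \<notin> D n" "x \<circ> s0 \<circ> (y \<circ> s0) \<in> D n"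
    using x y xB yB comp_in_D_iff comp_s0_in_D_iff[OF n] by simp_all
qed

lemma conv_B_apply_D: assumes n: "1 \<le> n" and v: "v \<in> D n"
  shows "conv (B n) a b v = (\<Sum>x\<in>D n. \<Sum>y\<in>D n.
      (if x \<circ> y = v then a x * b y else 0)
    + (if x \<circ> (s0 \<circ> y \<circ> s0) = v then a (x \<circ> s0) * b (y \<circ> s0) else 0))"
  unfolding conv_B_apply[OF n]
  by (intro sum.cong refl) (use D_comp_parity[OF n] v in \<open>auto simp: o_assoc\<close>)

lemma conv_B_apply_comp_s0: assumes n: "1 \<le> n" and v: "v \<in> D n"
  shows "conv (B n) a b (v \<circ> s0) = (\<Sum>x\<in>D n. \<Sum>y\<in>D n.
      (if x \<circ> y = v then a x * b (y \<circ> s0) else 0)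
    + (if x \<circ> (s0 \<circ> y \<circ> s0) = v then a (x \<circ> s0) * b y else 0))"
  unfolding conv_B_apply[OF n]
  by (intro sum.cong refl) (use D_comp_parity[OF n] v in \<open>auto simp: o_assoc eq_comp_s0_iff\<close>)

lemma chi_lin_conv:
  assumes n: "1 \<le> n" and inv: "\<And>y. y \<in> D n \<Longrightarrow> chi_lin n b (s0 \<circ> y \<circ> s0) = chi_lin n b y"
  shows "chi_lin n (conv (B n) a b) = conv (D n) (chi_lin n a) (chi_lin n b)"
proof
  fix v
  show "chi_lin n (conv (B n) a b) v = conv (D n) (chi_lin n a) (chi_lin n b) v"
  proof (cases "v \<in> D n")
    case False
    then have "x \<circ> y \<noteq> v" if "x \<in> D n" "y \<in> D n" for x y
      using that comp_in_D_iff D_imp_B by blast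
    then show ?thesis
      using False by (simp add: chi_lin_apply[OF n] conv_def)
  next
    case True
    have conj: "(\<Sum>y\<in>D n. if x \<circ> (s0 \<circ> y \<circ> s0) = v then a (x \<circ> s0) * chi_lin n b y else 0)
      = (\<Sum>y\<in>D n. if x \<circ> y = v then a (x \<circ> s0) * chi_lin n b y else 0)" for x
    proof -
      have "(\<Sum>y\<in>D n. if x \<circ> (s0 \<circ> y \<circ> s0) = v then a (x \<circ> s0) * chi_lin n b y else 0)
        = (\<Sum>y\<in>D n. if x \<circ> (s0 \<circ> y \<circ> s0) = v then a (x \<circ> s0) * chi_lin n b (s0 \<circ> y \<circ> s0) else 0)"
        by (intro sum.cong refl) (simp add: inv)
      then show ?thesis
        using sum_D_s0_conj[OF n, of "\<lambda>y. if x \<circ> y = v then a (x \<circ> s0) * chi_lin n b y else 0"]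
        by simp
    qed
    have "chi_lin n (conv (B n) a b) v = conv (B n) a b v + conv (B n) a b (v \<circ> s0)"
      using True by (simp add: chi_lin_apply[OF n])
    also have "\<dots> = (\<Sum>x\<in>D n. \<Sum>y\<in>D n. if x \<circ> y = v then a x * chi_lin n b y else 0)
      + (\<Sum>x\<in>D n. \<Sum>y\<in>D n. if x \<circ> (s0 \<circ> y \<circ> s0) = v then a (x \<circ> s0) * chi_lin n b y else 0)"
      unfolding conv_B_apply_D[OF n True] conv_B_apply_comp_s0[OF n True] sum.distrib[symmetric]
      by (intro sum.cong refl) (simp add: chi_lin_apply[OF n] algebra_simps)
    also have "\<dots> = (\<Sum>x\<in>D n. \<Sum>y\<in>D n. if x \<circ> y = v then a x * chi_lin n b y else 0)
      + (\<Sum>x\<in>D n. \<Sum>y\<in>D n. if x \<circ> y = v then a (x \<circ> s0) * chi_lin n b y else 0)"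
      by (simp only: conj)
    also have "\<dots> = conv (D n) (chi_lin n a) (chi_lin n b) v"
      unfolding conv_def sum.distrib[symmetric]
      by (intro sum.cong refl) (simp add: chi_lin_apply[OF n] algebra_simps)
    finally show ?thesis .
  qed
qed

section \<open>Descent sets\<close>

lemma nat_set_eq_iff_0_1: "(X :: nat set) = Y \<longleftrightarrow>
    (0 \<in> X \<longleftrightarrow> 0 \<in> Y) \<and> (1 \<in> X \<longleftrightarrow> 1 \<in> Y) \<and> (\<forall>i\<ge>2. i \<in> X \<longleftrightarrow> i \<in> Y)"
  by (metis One_nat_def Suc_1 less_2_cases not_le set_eq_iff)

lemma nat_subset_iff_0_1: "(X :: nat set) \<subseteq> Y \<longleftrightarrow>
    (0 \<in> X \<longrightarrow> 0 \<in> Y) \<and> (1 \<in> X \<longrightarrow> 1 \<in> Y) \<and> (\<forall>i\<ge>2. i \<in> X \<longrightarrow> i \<in> Y)"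
  by (metis One_nat_def Suc_1 less_2_cases not_le subset_iff)

lemma dlab_set_eq_iff: "(K :: dlab set) = K' \<longleftrightarrow> (One' \<in> K \<longleftrightarrow> One' \<in> K') \<and> {i. L i \<in> K} = {i. L i \<in> K'}"
  by (metis (mono_tags) dlab.exhaust mem_Collect_eq subsetI subset_antisym)

lemma dlab_subset_iff: "(K :: dlab set) \<subseteq> K' \<longleftrightarrow> (One' \<in> K \<longrightarrow> One' \<in> K') \<and> {i. L i \<in> K} \<subseteq> {i. L i \<in> K'}"
  by (metis (mono_tags) dlab.exhaust mem_Collect_eq subset_iff)

lemma L_in_image_iff [simp]: "L i \<in> L ` J \<longleftrightarrow> i \<in> J"
  by auto

lemma One'_notin_image [simp]: "One' \<notin> L ` J"
  by auto

definition des_meet :: "dlab set \<Rightarrow> nat set" where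
  "des_meet K = {i. L i \<in> K \<and> (i = 1 \<longrightarrow> One' \<in> K)}"

definition des_join :: "dlab set \<Rightarrow> nat set" where
  "des_join K = {i. L i \<in> K \<or> i = 1 \<and> One' \<in> K}"

text \<open>Position 1 is a descent of \<open>v\<close> iff \<open>L 1 \<in> DesD n v\<close> and of \<open>v \<circ> s0\<close> iff
  \<open>One' \<in> DesD n v\<close>. Whichever of the two has a negative first entry has the descent 0,
  and for it the condition at 1 implies the other one.\<close>
lemma DesB_pair: assumes n: "2 \<le> n" and v: "v \<in> B n"
  shows "{DesB n v, DesB n (v \<circ> s0)} = {insert 0 (des_meet (DesD n v)), des_join (DesD n v)}"
proof -
  let ?K = "DesD n v"
  have low: "0 \<in> DesB n v \<longleftrightarrow> v 1 < 0" "0 \<in> DesB n (v \<circ> s0) \<longleftrightarrow> 0 < v 1"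
      "1 \<in> DesB n v \<longleftrightarrow> v 2 < v 1" "1 \<in> DesB n (v \<circ> s0) \<longleftrightarrow> v 2 < - v 1"
    using n B_zero[OF v] by (simp_all add: DesB_def apply_s0[OF v])
  have K: "L 0 \<notin> ?K" "One' \<in> ?K \<longleftrightarrow> v 2 < - v 1" "L 1 \<in> ?K \<longleftrightarrow> v 2 < v 1"
    using n by (auto simp: DesD_def)
  have high: "i \<in> DesB n v \<longleftrightarrow> L i \<in> ?K" "i \<in> DesB n (v \<circ> s0) \<longleftrightarrow> L i \<in> ?K" if "2 \<le> i" for i
    using that by (auto simp: DesB_def DesD_def apply_s0[OF v])
  have "v 1 \<noteq> 0"
    using n B_nonzero[OF v, of 1] by simp
  then consider (pos) "0 < v 1" | (neg) "v 1 < 0"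
    by linarith
  then show ?thesis
  proof cases
    case pos
    then have "DesB n v = des_join ?K" "DesB n (v \<circ> s0) = insert 0 (des_meet ?K)"
      unfolding nat_set_eq_iff_0_1 using low K high by (auto simp: des_meet_def des_join_def)
    then show ?thesis
      by auto
  next
    case neg
    then have "DesB n v = insert 0 (des_meet ?K)" "DesB n (v \<circ> s0) = des_join ?K"
      unfolding nat_set_eq_iff_0_1 using low K high by (auto simp: des_meet_def des_join_def)
    then show ?thesis
      by auto
  qed
qed

lemma chi_lin_DesB:
  assumes n: "2 \<le> n" and a: "\<And>w. w \<in> B n \<Longrightarrow> a w = c (DesB n w)" and v: "v \<in> D n"
  shows "chi_lin n a v = c (insert 0 (des_meet (DesD n v))) + c (des_join (DesD n v))"
proof -
  have vB: "v \<in> B n"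
    using v D_imp_B by blast
  have "{DesB n v, DesB n (v \<circ> s0)} = {insert 0 (des_meet (DesD n v)), des_join (DesD n v)}"
    using DesB_pair[OF n vB] .
  then have "c (DesB n v) + c (DesB n (v \<circ> s0)) = c (insert 0 (des_meet (DesD n v))) + c (des_join (DesD n v))"
    by (auto simp: doubleton_eq_iff)
  then show ?thesis
    using n v vB a comp_in_B[OF vB s0_in_B] by (simp add: chi_lin_apply)
qed

lemma SigmaD_memI: "(\<lambda>v. if v \<in> D n then d (DesD n v) else 0) \<in> SigmaD n"
  unfolding SigmaD_def
proof (intro CollectI exI ext)
  have "DesD n v \<in> Pow (labelsD n)" for v
    unfolding DesD_def labelsD_def by auto
  then show "(if v \<in> D n then d (DesD n v) else 0) = (\<Sum>J\<in>Pow (labelsD n). d J * YD n J v)" for v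
    unfolding YD_def by (simp add: if_distrib[of "(*) _"] sum.delta labelsD_def cong: if_cong)
qed

lemma chi_lin_SigmaB: assumes n: "2 \<le> n" and a: "a \<in> SigmaB n" shows "chi_lin n a \<in> SigmaD n"
proof -
  obtain c where c: "\<And>w. a w = (if w \<in> B n then c (DesB n w) else 0)"
    using SigmaB_apply[OF a] by blast
  have "chi_lin n a = (\<lambda>v. if v \<in> D n then c (insert 0 (des_meet (DesD n v))) + c (des_join (DesD n v)) else 0)"
    using chi_lin_DesB[OF n, of a c] c chi_lin_apply[of n a] n by (auto simp: fun_eq_iff)
  then show ?thesis
    using SigmaD_memI[of n "\<lambda>K. c (insert 0 (des_meet K)) + c (des_join K)"] by simp
qed

lemma YB_apply: "YB n K w = of_bool (w \<in> B n \<and> DesB n w = K)"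
  by (simp add: YB_def)

lemma XB_apply: "finite K \<Longrightarrow> XB n K w = of_bool (w \<in> B n \<and> DesB n w \<subseteq> K)"
  unfolding XB_def YB_def by (cases "w \<in> B n") (auto simp: sum.delta')

lemma YD_apply_D: "v \<in> D n \<Longrightarrow> YD n K v = of_bool (DesD n v = K)"
  by (simp add: YD_def)

lemma XD_apply: "finite K \<Longrightarrow> XD n K w = of_bool (w \<in> D n \<and> DesD n w \<subseteq> K)"
  unfolding XD_def YD_def by (cases "w \<in> D n") (auto simp: sum.delta')

lemma XD_apply_D: "v \<in> D n \<Longrightarrow> finite K \<Longrightarrow> XD n K v = of_bool (DesD n v \<subseteq> K)"
  by (simp add: XD_apply)

lemma chi_lin_YB: "2 \<le> n \<Longrightarrow> v \<in> D n \<Longrightarrow>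
    chi_lin n (YB n K) v = of_bool (insert 0 (des_meet (DesD n v)) = K) + of_bool (des_join (DesD n v) = K)"
  by (rule chi_lin_DesB) (simp_all add: YB_apply)

lemma chi_lin_XB: "2 \<le> n \<Longrightarrow> finite K \<Longrightarrow> v \<in> D n \<Longrightarrow>
    chi_lin n (XB n K) v = of_bool (insert 0 (des_meet (DesD n v)) \<subseteq> K) + of_bool (des_join (DesD n v) \<subseteq> K)"
  by (rule chi_lin_DesB) (simp_all add: XB_apply)

lemma des_pair_eq_counts:
  fixes K :: "dlab set" and J :: "nat set"
  assumes "L 0 \<notin> K" "0 \<notin> J" "1 \<notin> J"
  defines "N X \<equiv> (of_bool (insert 0 (des_meet K) = X) + of_bool (des_join K = X) :: rat)"
  shows "N J = of_bool (K = L ` J)"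
    and "N ({1} \<union> J) = of_bool (K = {One'} \<union> L ` J) + of_bool (K = {L 1} \<union> L ` J)
      + of_bool (K = {One', L 1} \<union> L ` J)"
    and "N ({0} \<union> J) = of_bool (K = L ` J) + of_bool (K = {One'} \<union> L ` J) + of_bool (K = {L 1} \<union> L ` J)"
    and "N ({0, 1} \<union> J) = of_bool (K = {One', L 1} \<union> L ` J)"
  using assms unfolding dlab_set_eq_iff nat_set_eq_iff_0_1
  by (cases "One' \<in> K"; cases "L 1 \<in> K"; simp add: des_meet_def des_join_def)+

lemma des_pair_subset_counts:
  fixes K :: "dlab set" and J :: "nat set"
  assumes "L 0 \<notin> K" "0 \<notin> J" "1 \<notin> J"
  defines "N X \<equiv> (of_bool (insert 0 (des_meet K) \<subseteq> X) + of_bool (des_join K \<subseteq> X) :: rat)"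
  shows "N J = of_bool (K \<subseteq> L ` J)"
    and "N ({1} \<union> J) = of_bool (K \<subseteq> {One', L 1} \<union> L ` J)"
    and "N ({0} \<union> J) = of_bool (K \<subseteq> {One'} \<union> L ` J) + of_bool (K \<subseteq> {L 1} \<union> L ` J)"
    and "N ({0, 1} \<union> J) = 2 * of_bool (K \<subseteq> {One', L 1} \<union> L ` J)"
  using assms unfolding dlab_subset_iff nat_subset_iff_0_1
  by (cases "One' \<in> K"; cases "L 1 \<in> K"; simp add: des_meet_def des_join_def)+

lemma chi_lin_eqI:
  assumes "1 \<le> n" "\<And>v. v \<in> D n \<Longrightarrow> chi_lin n a v = g v" "\<And>v. v \<notin> D n \<Longrightarrow> g v = 0"
  shows "chi_lin n a = g"
  using assms chi_lin_apply[OF assms(1)] by (auto simp: fun_eq_iff)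

lemma chi_lin_YB_XB:
  assumes n: "2 \<le> n" and J: "J \<subseteq> {2..<n}"
  shows "chi_lin n (YB n J) = YD n (L ` J)
        \<and> chi_lin n (YB n ({1} \<union> J)) =
            (\<lambda>v. YD n ({One'} \<union> L ` J) v + YD n ({L 1} \<union> L ` J) v + YD n ({One', L 1} \<union> L ` J) v)
        \<and> chi_lin n (YB n ({0} \<union> J)) =
            (\<lambda>v. YD n (L ` J) v + YD n ({One'} \<union> L ` J) v + YD n ({L 1} \<union> L ` J) v)
        \<and> chi_lin n (YB n ({0, 1} \<union> J)) = YD n ({One', L 1} \<union> L ` J)
        \<and> chi_lin n (XB n J) = XD n (L ` J)
        \<and> chi_lin n (XB n ({1} \<union> J)) = XD n ({One', L 1} \<union> L ` J)
        \<and> chi_lin n (XB n ({0} \<union> J)) = (\<lambda>v. XD n ({One'} \<union> L ` J) v + XD n ({L 1} \<union> L ` J) v)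
        \<and> chi_lin n (XB n ({0, 1} \<union> J)) = (\<lambda>v. 2 * XD n ({One', L 1} \<union> L ` J) v)"
proof -
  have n1: "1 \<le> n"
    using n by simp
  have L0: "L 0 \<notin> DesD n v" for v
    by (simp add: DesD_def)
  have J01: "0 \<notin> J" "1 \<notin> J"
    using J by auto
  have "finite J"
    using J finite_subset by blast
  then have fin: "finite J" "finite ({1} \<union> J)" "finite ({0} \<union> J)" "finite ({0, 1} \<union> J)"
    "finite (L ` J)" "finite ({One'} \<union> L ` J)" "finite ({L 1} \<union> L ` J)" "finite ({One', L 1} \<union> L ` J)"
    by simp_all
  show ?thesis
    by (intro conjI; rule chi_lin_eqI[OF n1])
      (simp_all only: chi_lin_YB[OF n] chi_lin_XB[OF n] YD_apply_D XD_apply_D fin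
        des_pair_eq_counts[OF L0 J01] des_pair_subset_counts[OF L0 J01] | simp add: YD_def XD_def)+
qed

theorem proposition2p1:
  fixes n :: nat
  assumes "n \<ge> 2"
  shows "(\<forall>a\<in>SigmaB n. chi_lin n a \<in> SigmaD n)
    \<and> (\<forall>a\<in>SigmaB n. \<forall>b\<in>SigmaB n.
          chi_lin n (conv (B n) a b) = conv (D n) (chi_lin n a) (chi_lin n b))
    \<and> (\<forall>J. J \<subseteq> {2..<n} \<longrightarrow>
          chi_lin n (YB n J) = YD n (L ` J)
        \<and> chi_lin n (YB n ({1} \<union> J)) =
            (\<lambda>v. YD n ({One'} \<union> L ` J) v + YD n ({L 1} \<union> L ` J) v + YD n ({One', L 1} \<union> L ` J) v)
        \<and> chi_lin n (YB n ({0} \<union> J)) =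
            (\<lambda>v. YD n (L ` J) v + YD n ({One'} \<union> L ` J) v + YD n ({L 1} \<union> L ` J) v)
        \<and> chi_lin n (YB n ({0, 1} \<union> J)) = YD n ({One', L 1} \<union> L ` J)
        \<and> chi_lin n (XB n J) = XD n (L ` J)
        \<and> chi_lin n (XB n ({1} \<union> J)) = XD n ({One', L 1} \<union> L ` J)
        \<and> chi_lin n (XB n ({0} \<union> J)) = (\<lambda>v. XD n ({One'} \<union> L ` J) v + XD n ({L 1} \<union> L ` J) v)
        \<and> chi_lin n (XB n ({0, 1} \<union> J)) = (\<lambda>v. 2 * XD n ({One', L 1} \<union> L ` J) v))"
proof -
  have n1: "1 \<le> n"
    using assms by simp
  show ?thesis
    using chi_lin_SigmaB[OF assms] chi_lin_conv[OF n1 chi_lin_SigmaB_s0_conj[OF n1]] chi_lin_YB_XB[OF assms]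
    by blast
qed

end
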